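(* Let $n_1=n_2=2$, let $D_i,a_i,\lambda_i,\chi_i>0$ for $i\in\{1,2\}$ with $\lambda_2>a_2\lambda_1$, and assume (IE). Let $A:=\frac{a_1}{a_2}$, $u_\star:=\frac{\lambda_1+a_1\lambda_2}{1+a_1a_2}$, $v_\star:=\frac{\lambda_2-a_2\lambda_1}{1+a_1a_2}$, and for $\xi_\star>0$ let $\phi_{\xi_\star}(\xi):=\xi-\xi_\star-\xi_\star\ln\frac{\xi}{\xi_\star}$, $\xi>0$. Define $$\mathcal{E}_{1\varepsilon}(t):=\int_\Omega\phi_{u_\star}(u_\varepsilon(\cdot,t))+\frac{u_\star\varepsilon}{6}\int_\Omega\frac{1}{u_\varepsilon^2(\cdot,t)}+A\int_\Omega\phi_{v_\star}(v_\varepsilon(\cdot,t))+\frac{Av_\star\varepsilon}{6}\int_\Omega\frac{1}{v_\varepsilon^2(\cdot,t)},\qquad t\ge0,\ \varepsilon\in(0,1).$$ Then for all $t>0$ and $\varepsilon\in(0,1)$, $$\begin{aligned}&\frac{d}{dt}\mathcal{E}_{1\varepsilon}(t)+\Big\{\frac{D_1u_\star}{2}-\frac{A\chi_2^2v_\star}{2D_2}\|u_\varepsilon(\cdot,t)\|_{L^\infty(\Omega)}^2\Big\}\int_\Omega\frac{u_{\varepsilon x}^2}{u_\varepsilon^2}+\Big\{\frac{AD_2v_\star}{2}-\frac{\chi_1^2u_\star}{2D_1}\|v_\varepsilon(\cdot,t)\|_{L^\infty(\Omega)}^2\Big\}\int_\Omega\frac{v_{\varepsilon x}^2}{v_\varepsilon^2}\\&\quad+\int_\Omega(u_\varepsilon-u_\star)^2+A\int_\Omega(v_\varepsilon-v_\star)^2+u_\star\varepsilon^{\frac{\alpha+2}{2}}\int_\Omega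 u_\varepsilon^{-\alpha-4}u_{\varepsilon x}^2+Av_\star\varepsilon^{\frac{\alpha+2}{2}}\int_\Omega v_\varepsilon^{-\alpha-4}v_{\varepsilon x}^2\\&\le\frac{1+a_1}{2\sqrt3}\sqrt\varepsilon\int_\Omega u_\varepsilon+\frac{A}{2\sqrt3}\sqrt\varepsilon\int_\Omega v_\varepsilon.\end{aligned}$$
   Context: Let $\Omega\subset\mathbb{R}$ be a bounded open interval and fix $\alpha\in(0,\frac12]$. Assumption (IE): $u_0,v_0\in W^{1,2}(\Omega)$ with $u_0>0,v_0>0$ in $\overline\Omega$; for each $\varepsilon\in(0,1)$, $u_{0\varepsilon},v_{0\varepsilon}\in C^5(\overline\Omega)$ with $u_{0\varepsilon x}=u_{0\varepsilon xxx}=v_{0\varepsilon x}=v_{0\varepsilon xxx}=0$ on $\partial\Omega$; $\frac12\inf_\Omega u_0\le u_{0\varepsilon}\le u_0+1$, $\frac12\inf_\Omega v_0\le v_{0\varepsilon}\le v_0+1$ in $\Omega$; $\int_\Omega u_{0\varepsilon x}^2\le\int_\Omega u_{0x}^2+1$, $\int_\Omega v_{0\varepsilon x}^2\le\int_\Omega v_{0x}^2+1$; $u_{0\varepsilon}\to u_0$, $v_{0\varepsilon}\to v_0$ a.e. as $\varepsilon\searrow0$. $(u_\varepsilon,v_\varepsilon)$ is the global positive classical solution of the approximating problem $u_t=-\varepsilon\big(\frac{u^4}{u^{4-n_1}+\varepsilon}u_{xxx}\big)_x+\varepsilon^{\alpha/2}(u^{-\alpha}u_x)_x+D_1u_{xx}-\chi_1\big(\frac{u^{5-n_1}}{u^{4-n_1}+\varepsilon}v_x\big)_x+\frac{3u^3}{3u^2+\varepsilon}(\lambda_1-u+a_1v)$,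 $v_t=-\varepsilon\big(\frac{v^4}{v^{4-n_2}+\varepsilon}v_{xxx}\big)_x+\varepsilon^{\alpha/2}(v^{-\alpha}v_x)_x+D_2v_{xx}+\chi_2\big(\frac{v^{5-n_2}}{v^{4-n_2}+\varepsilon}u_x\big)_x+\frac{3v^3}{3v^2+\varepsilon}(\lambda_2-v-a_2u)$ in $\Omega\times(0,\infty)$, $u_x=v_x=u_{xxx}=v_{xxx}=0$ on $\partial\Omega$, $u(\cdot,0)=u_{0\varepsilon}$, $v(\cdot,0)=v_{0\varepsilon}$ (global for $n_1,n_2\in[1,2]$). *)

theory Defs
  imports "HOL-Analysis.Analysis"
begin

definition phi :: "real \<Rightarrow> real \<Rightarrow> real" where
  "phi s \<xi> = \<xi> - s - s * ln (\<xi> / s)"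

text \<open>W^{1,2}(a,b) in one dimension: f (continuous representative on [a,b]) is an
  indefinite integral of g, and g is square integrable; g is the weak derivative.\<close>
definition W12 :: "real \<Rightarrow> real \<Rightarrow> (real \<Rightarrow> real) \<Rightarrow> (real \<Rightarrow> real) \<Rightarrow> bool" where
  "W12 a b f g \<longleftrightarrow> g integrable_on {a..b} \<and> (\<lambda>x. (g x)^2) integrable_on {a..b} \<and>
     (\<forall>x\<in>{a..b}. f x = f a + integral {a..x} g)"

definition Ck_on :: "nat \<Rightarrow> real \<Rightarrow> real \<Rightarrow> (nat \<Rightarrow> real \<Rightarrow> real) \<Rightarrow> bool" where
  "Ck_on k a b D \<longleftrightarrow>
     (\<forall>j<k. \<forall>x\<in>{a..b}. (D j has_real_derivative D (Suc j) x) (at x within {a..b})) \<and>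
     (\<forall>j\<le>k. continuous_on {a..b} (D j))"

text \<open>Classical regularity u in C^{4,1}(closure Omega x (0,inf)) cap C^0(closure Omega x [0,inf)),
  with the given partial derivative functions (x-derivatives one-sided at the boundary).\<close>
definition classical_C41 ::
  "real \<Rightarrow> real \<Rightarrow> (real \<Rightarrow> real \<Rightarrow> real) \<Rightarrow> (real \<Rightarrow> real \<Rightarrow> real) \<Rightarrow> (real \<Rightarrow> real \<Rightarrow> real)
   \<Rightarrow> (real \<Rightarrow> real \<Rightarrow> real) \<Rightarrow> (real \<Rightarrow> real \<Rightarrow> real) \<Rightarrow> (real \<Rightarrow> real \<Rightarrow> real) \<Rightarrow> bool" where
  "classical_C41 a b u ux uxx uxxx uxxxx ut \<longleftrightarrow>
     continuous_on ({a..b} \<times> {0..}) (\<lambda>(x,t). u x t) \<and>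
     continuous_on ({a..b} \<times> {0<..}) (\<lambda>(x,t). ux x t) \<and>
     continuous_on ({a..b} \<times> {0<..}) (\<lambda>(x,t). uxx x t) \<and>
     continuous_on ({a..b} \<times> {0<..}) (\<lambda>(x,t). uxxx x t) \<and>
     continuous_on ({a..b} \<times> {0<..}) (\<lambda>(x,t). uxxxx x t) \<and>
     continuous_on ({a..b} \<times> {0<..}) (\<lambda>(x,t). ut x t) \<and>
     (\<forall>t>0. \<forall>x\<in>{a..b}.
        ((\<lambda>y. u y t) has_real_derivative ux x t) (at x within {a..b}) \<and>
        ((\<lambda>y. ux y t) has_real_derivative uxx x t) (at x within {a..b}) \<and>
        ((\<lambda>y. uxx y t) has_real_derivative uxxx x t) (at x within {a..b}) \<and>
        ((\<lambda>y. uxxx y t) has_real_derivative uxxxx x t) (at x within {a..b}) \<and>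
        ((\<lambda>s. u x s) has_real_derivative ut x t) (at t))"

definition IE_data :: "real \<Rightarrow> real \<Rightarrow> (real \<Rightarrow> real) \<Rightarrow> (real \<Rightarrow> real) \<Rightarrow> (real \<Rightarrow> real \<Rightarrow> real) \<Rightarrow> bool" where
  "IE_data a b f0 f0x f0e \<longleftrightarrow>
     W12 a b f0 f0x \<and> (\<forall>x\<in>{a..b}. f0 x > 0) \<and>
     (\<forall>e\<in>{0<..<1}. \<exists>D. Ck_on 5 a b D \<and> D 0 = f0e e \<and>
        D 1 a = 0 \<and> D 1 b = 0 \<and> D 3 a = 0 \<and> D 3 b = 0 \<and>
        (\<forall>x\<in>{a<..<b}. Inf (f0 ` {a<..<b}) / 2 \<le> f0e e x \<and> f0e e x \<le> f0 x + 1) \<and>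
        integral {a..b} (\<lambda>x. (D 1 x)^2) \<le> integral {a..b} (\<lambda>x. (f0x x)^2) + 1) \<and>
     (AE x in lborel. x \<in> {a<..<b} \<longrightarrow> ((\<lambda>e. f0e e x) \<longlongrightarrow> f0 x) (at_right 0))"

end

theory Submission
  imports Defs
begin

(* The energy consists of the densities phi_c(y) + (c eps/6) y^-2, with c = u* or c = v*, whose
   derivative is the weight 1 - c/y - c eps/(3 y^3).  Multiplying each equation by its weight and
   integrating by parts under the no-flux conditions, the derivative c (y^2 + eps) y^-4 y_x of the
   weight exactly cancels the mobility y^4/(y^2 + eps), so the fourth-order term contributes
   -c eps int y_xx^2 <= 0; the other diffusion terms give the gradient integrals, and the taxis terms
   are absorbed by Young's inequality with the supremum of the other species.  The weight also turns
   the regularised kinetics 3y^3/(3y^2 + eps) into y - c - eps y/(3y^2 + eps): at the coexistence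
   state u = u*, v = v* the quadratic and cross terms of the Lotka-Volterra reactions cancel, and the
   remainder is controlled by eps y/(3y^2 + eps) <= sqrt eps/(2 sqrt 3). *)

lemma eps_ratio_le_sqrt:
  fixes e y :: real
  assumes "e > 0" "y \<ge> 0"
  shows "e * y / (3 * y^2 + e) \<le> sqrt e / (2 * sqrt 3)"
proof -
  define s where "s = sqrt e"
  define r where "r = sqrt (3::real)"
  have s: "s > 0" "s^2 = e" using assms by (auto simp: s_def)
  have r: "r > 0" "r^2 = 3" by (auto simp: r_def)
  have "0 \<le> s * (r * y - s)^2" using s by simp
  then have "2 * r * s^2 * y \<le> s * (r^2 * y^2 + s^2)"
    by (simp add: power2_eq_square algebra_simps)
  then have "2 * r * e * y \<le> s * (3 * y^2 + e)" using s r by simp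
  moreover have "3 * y^2 + e > 0" using assms by (simp add: add_nonneg_pos)
  ultimately show ?thesis
    using r s unfolding s_def[symmetric] r_def[symmetric]
    by (simp add: divide_simps) (simp add: algebra_simps)
qed

lemma coexistence_equilibrium:
  fixes a1 a2 lam1 lam2 us vs :: real
  assumes nz: "1 + a1 * a2 \<noteq> 0"
    and us: "us = (lam1 + a1 * lam2) / (1 + a1 * a2)"
    and vs: "vs = (lam2 - a2 * lam1) / (1 + a1 * a2)"
  shows "lam1 = us - a1 * vs" "lam2 = vs + a2 * us"
proof -
  have usd: "us * (1 + a1 * a2) = lam1 + a1 * lam2" and vsd: "vs * (1 + a1 * a2) = lam2 - a2 * lam1"
    using nz unfolding us vs by simp_all
  have "(us - a1 * vs) * (1 + a1 * a2) = lam1 * (1 + a1 * a2)"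
       "(vs + a2 * us) * (1 + a1 * a2) = lam2 * (1 + a1 * a2)"
    using usd vsd by algebra+
  then show "lam1 = us - a1 * vs" "lam2 = vs + a2 * us"
    using nz by simp_all
qed

lemma coexistence_equilibrium_pos:
  fixes a1 a2 lam1 lam2 us vs :: real
  assumes "a1 > 0" "a2 > 0" "lam1 > 0" "lam2 > a2 * lam1"
    and "us = (lam1 + a1 * lam2) / (1 + a1 * a2)"
    and "vs = (lam2 - a2 * lam1) / (1 + a1 * a2)"
  shows "us > 0" "vs > 0"
proof -
  have "1 + a1 * a2 > 0" "lam2 > 0"
    using assms(1-4) by (simp add: add_pos_pos, smt (verit) mult_pos_pos)
  then show "us > 0" "vs > 0" using assms by (simp_all add: add_pos_pos)
qed

lemma reaction_terms_le:
  fixes U V e a1 a2 lam1 lam2 A us vs :: real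
  assumes U: "U > 0" and V: "V > 0" and e: "e > 0" and a1: "a1 > 0" and a2: "a2 > 0"
    and lam1: "lam1 > 0" and lam2: "lam2 > a2 * lam1"
    and A: "A = a1 / a2"
    and us: "us = (lam1 + a1 * lam2) / (1 + a1 * a2)"
    and vs: "vs = (lam2 - a2 * lam1) / (1 + a1 * a2)"
  shows "(U - e * U / (3 * U^2 + e) - us) * (lam1 - U + a1 * V)
       + A * ((V - e * V / (3 * V^2 + e) - vs) * (lam2 - V - a2 * U))
       + (U - us)^2 + A * (V - vs)^2
     \<le> (1 + a1) / (2 * sqrt 3) * sqrt e * U + A / (2 * sqrt 3) * sqrt e * V"
proof -
  define ku where "ku = e * U / (3 * U^2 + e)"
  define kv where "kv = e * V / (3 * V^2 + e)"
  define c where "c = sqrt e / (2 * sqrt 3)"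
  have "1 + a1 * a2 \<noteq> 0" using a1 a2 by (smt (verit) mult_pos_pos)
  note equilibrium = coexistence_equilibrium[OF this us vs]
  have Aa2: "A * a2 = a1" using a2 unfolding A by simp
  have "A > 0" using a1 a2 A by simp
  have k_nonneg: "ku \<ge> 0" "kv \<ge> 0"
    using U V e unfolding ku_def kv_def by (auto intro: divide_nonneg_pos add_nonneg_pos)
  have k_le: "ku \<le> c" "kv \<le> c"
    unfolding ku_def kv_def c_def using eps_ratio_le_sqrt e U V by auto
  \<comment> \<open>At the equilibrium the quadratic terms and the cross terms cancel exactly.\<close>
  have "(U - ku - us) * (lam1 - U + a1 * V) + A * ((V - kv - vs) * (lam2 - V - a2 * U))
       + (U - us)^2 + A * (V - vs)^2
      = ku * U + A * kv * V + a1 * kv * U - ku * (lam1 + a1 * V) - A * kv * lam2"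
    unfolding equilibrium by (simp add: algebra_simps power2_eq_square Aa2[symmetric])
  also have "\<dots> \<le> c * U + A * c * V + a1 * c * U"
  proof -
    have "lam2 > 0" using lam2 mult_pos_pos[OF a2 lam1] by linarith
    then have "ku * (lam1 + a1 * V) \<ge> 0" "A * kv * lam2 \<ge> 0"
      using k_nonneg lam1 a1 V \<open>A > 0\<close> by simp_all
    moreover have "ku * U \<le> c * U" "A * kv * V \<le> A * c * V" "a1 * kv * U \<le> a1 * c * U"
      using k_le U V a1 \<open>A > 0\<close> by (simp_all add: mult_right_mono mult_left_mono)
    ultimately show ?thesis by linarith
  qed
  also have "\<dots> = (1 + a1) / (2 * sqrt 3) * sqrt e * U + A / (2 * sqrt 3) * sqrt e * V"
    unfolding c_def by (simp add: field_simps)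
  finally show ?thesis unfolding ku_def kv_def .
qed

definition energy_weight :: "real \<Rightarrow> real \<Rightarrow> real \<Rightarrow> real" where
  "energy_weight c e y = 1 - c / y - c * e / (3 * y^3)"

lemma energy_weight_mult_eq:
  fixes c e y :: real
  assumes "y > 0" "e \<ge> 0"
  shows "energy_weight c e y * (3 * y^3 / (3 * y^2 + e)) = y - e * y / (3 * y^2 + e) - c"
proof -
  have d: "3 * y^2 + e > 0" using assms by (simp add: add_pos_nonneg)
  have "energy_weight c e y = (3 * y^3 - c * (3 * y^2 + e)) / (3 * y^3)"
    using assms by (simp add: energy_weight_def field_simps power2_eq_square power3_eq_cube)
  moreover have "y - e * y / (3 * y^2 + e) - c = (3 * y^3 - c * (3 * y^2 + e)) / (3 * y^2 + e)"
    using d by (simp add: field_simps power2_eq_square power3_eq_cube)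
  ultimately show ?thesis using assms d by simp
qed

lemma energy_density_has_derivative:
  fixes c e y :: real
  assumes "c > 0" "y > 0"
  shows "((\<lambda>y. phi c y + c * e / 6 * (1 / y^2)) has_real_derivative energy_weight c e y) (at y)"
  unfolding phi_def energy_weight_def using assms
  by (auto intro!: derivative_eq_intros simp: field_simps eval_nat_numeral)

lemma energy_weight_has_derivative:
  fixes c e y :: real
  assumes "y \<noteq> 0"
  shows "(energy_weight c e has_real_derivative c / y^2 + c * e / y^4) (at y)"
  unfolding energy_weight_def using assms
  by (auto intro!: derivative_eq_intros simp: field_simps eval_nat_numeral)

lemma continuous_on_energy_weight: "continuous_on {0<..} (energy_weight c e)"
  unfolding energy_weight_def by (auto intro!: continuous_intros)

lemma continuous_on_energy_weight_comp [continuous_intros]: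
  assumes "continuous_on S f" "\<And>x. x \<in> S \<Longrightarrow> f x > 0"
  shows "continuous_on S (\<lambda>x. energy_weight c e (f x))"
  using continuous_on_compose2[OF continuous_on_energy_weight assms(1)] assms(2) by auto

text \<open>With n = 2 the equation for u reads
  u_t = (regularized_flux e \<alpha> D1 (-chi1) u u_x u_xxx v_x)_x + 3u^3/(3u^2 + e) (lam1 - u + a1 v),
  and the equation for v has the same form with chi = chi2 and the roles of u and v exchanged.\<close>
definition regularized_flux ::
  "real \<Rightarrow> real \<Rightarrow> real \<Rightarrow> real \<Rightarrow> real \<Rightarrow> real \<Rightarrow> real \<Rightarrow> real \<Rightarrow> real" where
  "regularized_flux e \<alpha> D chi y yx yxxx zx =
     - e * (y^4 / (y^2 + e) * yxxx) + e powr (\<alpha>/2) * (y powr (-\<alpha>) * yx) + D * yx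
     + chi * (y^3 / (y^2 + e) * zx)"

lemma regularized_flux_minus:
  "- e * (y^4 / (y^2 + e) * yxxx) + e powr (\<alpha>/2) * (y powr (-\<alpha>) * yx) + D * yx - chi * (y^3 / (y^2 + e) * zx)
     = regularized_flux e \<alpha> D (- chi) y yx yxxx zx"
  by (simp add: regularized_flux_def)

lemma regularized_flux_zero [simp]: "regularized_flux e \<alpha> D chi y 0 0 0 = 0"
  by (simp add: regularized_flux_def)

lemma continuous_on_regularized_flux [continuous_intros]:
  assumes "continuous_on S y" "continuous_on S yx" "continuous_on S yxxx" "continuous_on S zx"
    and "\<And>x. x \<in> S \<Longrightarrow> y x > 0" and "e \<ge> 0"
  shows "continuous_on S (\<lambda>x. regularized_flux e \<alpha> D chi (y x) (yx x) (yxxx x) (zx x))"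
proof -
  have "y x \<noteq> 0" "(y x)^2 + e \<noteq> 0" if "x \<in> S" for x
    using assms(5)[OF that] assms(6) by (smt (verit) zero_less_power)+
  then show ?thesis
    unfolding regularized_flux_def using assms by (auto intro!: continuous_intros)
qed

lemma flux_expansion:
  fixes c e \<alpha> D chi y yx yxxx zx :: real
  assumes y: "y > 0" and e: "e > 0"
  shows "(c / y^2 + c * e / y^4) * yx * regularized_flux e \<alpha> D chi y yx yxxx zx + c * e * (yx * yxxx)
       = c * e powr (\<alpha>/2) * y powr (-\<alpha>) * (yx^2 / y^2) + c * e powr ((\<alpha> + 2) / 2) * (y powr (-\<alpha> - 4) * yx^2)
         + c * D * (yx^2 / y^2) + c * D * e * (yx^2 / y^4) + c * chi * (yx / y) * zx"
proof -
  define w where "w = c * (y^2 + e) / y^4"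
  have d: "y^2 + e > 0" using y e by (simp add: add_pos_pos)
  have weight: "c / y^2 + c * e / y^4 = w"
    unfolding w_def using y by (simp add: field_simps eval_nat_numeral)
  have fourth_order: "w * yx * (- e * (y^4 / (y^2 + e) * yxxx)) = - c * e * (yx * yxxx)"
  proof -
    have cancel: "w * (y^4 / (y^2 + e)) = c" unfolding w_def using y d by simp
    have rearrange: "w * yx * (- e * (q * yxxx)) = - e * (yx * yxxx) * (w * q)" for q
      by (simp add: algebra_simps)
    show ?thesis unfolding rearrange[of "y^4 / (y^2 + e)"] cancel by simp
  qed
  have singular_diffusion: "w * yx * (e powr (\<alpha>/2) * (y powr (-\<alpha>) * yx))
      = c * e powr (\<alpha>/2) * y powr (-\<alpha>) * (yx^2 / y^2) + c * e powr ((\<alpha> + 2) / 2) * (y powr (-\<alpha> - 4) * yx^2)"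
  proof -
    have "e powr ((\<alpha> + 2) / 2) = e powr (\<alpha>/2) * e"
      using e by (simp add: add_divide_distrib powr_add)
    moreover have "y powr (-\<alpha> - 4) = y powr (-\<alpha>) / y^4"
      using y by (simp add: powr_diff powr_realpow)
    ultimately show ?thesis
      unfolding w_def using y by (simp add: field_simps eval_nat_numeral)
  qed
  have diffusion: "w * yx * (D * yx) = c * D * (yx^2 / y^2) + c * D * e * (yx^2 / y^4)"
    unfolding w_def using y by (simp add: field_simps eval_nat_numeral)
  have taxis: "w * yx * (chi * (y^3 / (y^2 + e) * zx)) = c * chi * (yx / y) * zx"
  proof -
    have cancel: "w * (y^3 / (y^2 + e)) = c / y"
      unfolding w_def using y d by (simp add: eval_nat_numeral)
    have rearrange: "w * yx * (chi * (q * zx)) = chi * yx * zx * (w * q)" for q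
      by (simp add: algebra_simps)
    show ?thesis unfolding rearrange[of "y^3 / (y^2 + e)"] cancel by simp
  qed
  show ?thesis
    unfolding regularized_flux_def weight distrib_left fourth_order singular_diffusion diffusion taxis by simp
qed

lemma young_cross_term_le:
  fixes D chi X z zx S :: real
  assumes D: "D > 0" and z: "z \<noteq> 0" and S: "z^2 \<le> S^2"
  shows "chi * X * zx \<le> D / 2 * X^2 + chi^2 / (2 * D) * S^2 * (zx^2 / z^2)"
proof -
  have "0 \<le> (D * X - chi * zx)^2" by simp
  then have "chi * X * zx \<le> D / 2 * X^2 + chi^2 / (2 * D) * zx^2"
    using D by (simp add: field_simps power2_eq_square)
  also have "zx^2 = z^2 * (zx^2 / z^2)" using z by simp
  also have "chi^2 / (2 * D) * (z^2 * (zx^2 / z^2)) \<le> chi^2 / (2 * D) * (S^2 * (zx^2 / z^2))"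
    using D S by (intro mult_left_mono mult_right_mono) auto
  finally show ?thesis by (simp add: algebra_simps)
qed

lemma flux_dissipation_le:
  fixes c e \<alpha> D chi y yx yxxx z zx S :: real
  assumes y: "y > 0" and e: "e > 0" and c: "c \<ge> 0" and D: "D > 0"
    and z: "z \<noteq> 0" and S: "z^2 \<le> S^2"
  shows "- ((c / y^2 + c * e / y^4) * yx * regularized_flux e \<alpha> D chi y yx yxxx zx + c * e * (yx * yxxx))
         + c * D / 2 * (yx^2 / y^2) + c * e powr ((\<alpha> + 2) / 2) * (y powr (-\<alpha> - 4) * yx^2)
       \<le> chi^2 * c / (2 * D) * S^2 * (zx^2 / z^2)"
proof -
  have "c * ((- chi) * (yx / y) * zx) \<le> c * (D / 2 * (yx / y)^2 + (- chi)^2 / (2 * D) * S^2 * (zx^2 / z^2))"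
    using young_cross_term_le[OF D z S] c by (rule mult_left_mono)
  moreover have "0 \<le> c * e powr (\<alpha>/2) * y powr (-\<alpha>) * (yx^2 / y^2)" "0 \<le> c * D * e * (yx^2 / y^4)"
    using c D e by simp_all
  ultimately show ?thesis
    unfolding flux_expansion[OF y e] by (simp add: algebra_simps power_divide)
qed

lemma pointwise_dissipation_le:
  fixes U Ux Uxxx V Vx Vxxx Su Sv e \<alpha> D1 D2 a1 a2 lam1 lam2 chi1 chi2 A us vs :: real
  assumes U: "U > 0" and V: "V > 0" and e: "e > 0"
    and pos: "D1 > 0" "D2 > 0" "a1 > 0" "a2 > 0" "lam1 > 0"
    and lam: "lam2 > a2 * lam1"
    and A_def: "A = a1 / a2"
    and us_def: "us = (lam1 + a1 * lam2) / (1 + a1 * a2)"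
    and vs_def: "vs = (lam2 - a2 * lam1) / (1 + a1 * a2)"
    and Su: "U^2 \<le> Su^2" and Sv: "V^2 \<le> Sv^2"
  shows "energy_weight us e U * (3 * U^3 / (3 * U^2 + e) * (lam1 - U + a1 * V))
       - ((us / U^2 + us * e / U^4) * Ux * regularized_flux e \<alpha> D1 (- chi1) U Ux Uxxx Vx + us * e * (Ux * Uxxx))
     + A * (energy_weight vs e V * (3 * V^3 / (3 * V^2 + e) * (lam2 - V - a2 * U))
       - ((vs / V^2 + vs * e / V^4) * Vx * regularized_flux e \<alpha> D2 chi2 V Vx Vxxx Ux + vs * e * (Vx * Vxxx)))
     + (D1 * us / 2 - A * chi2^2 * vs / (2 * D2) * Su^2) * (Ux^2 / U^2)
     + (A * D2 * vs / 2 - chi1^2 * us / (2 * D1) * Sv^2) * (Vx^2 / V^2)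
     + (U - us)^2 + A * (V - vs)^2
     + us * e powr ((\<alpha> + 2) / 2) * (U powr (-\<alpha> - 4) * Ux^2)
     + A * vs * e powr ((\<alpha> + 2) / 2) * (V powr (-\<alpha> - 4) * Vx^2)
     \<le> (1 + a1) / (2 * sqrt 3) * sqrt e * U + A / (2 * sqrt 3) * sqrt e * V"
proof -
  have "us > 0" "vs > 0"
    using coexistence_equilibrium_pos[OF pos(3-5) lam us_def vs_def] by simp_all
  have "A > 0" using pos A_def by simp
  have reaction: "energy_weight us e U * (3 * U^3 / (3 * U^2 + e) * (lam1 - U + a1 * V))
       + A * (energy_weight vs e V * (3 * V^3 / (3 * V^2 + e) * (lam2 - V - a2 * U)))
       + (U - us)^2 + A * (V - vs)^2
     \<le> (1 + a1) / (2 * sqrt 3) * sqrt e * U + A / (2 * sqrt 3) * sqrt e * V"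
    using reaction_terms_le[OF U V e pos(3-5) lam A_def us_def vs_def] U V e
    by (simp only: mult.assoc[symmetric] energy_weight_mult_eq less_imp_le)
  have flux_u: "- ((us / U^2 + us * e / U^4) * Ux * regularized_flux e \<alpha> D1 (- chi1) U Ux Uxxx Vx + us * e * (Ux * Uxxx))
         + us * D1 / 2 * (Ux^2 / U^2) + us * e powr ((\<alpha> + 2) / 2) * (U powr (-\<alpha> - 4) * Ux^2)
       \<le> chi1^2 * us / (2 * D1) * Sv^2 * (Vx^2 / V^2)"
    using flux_dissipation_le[where chi = "- chi1" and yx = Ux and yxxx = Uxxx and zx = Vx,
        OF U e _ pos(1) _ Sv] \<open>us > 0\<close> V by simp
  have flux_v: "- ((vs / V^2 + vs * e / V^4) * Vx * regularized_flux e \<alpha> D2 chi2 V Vx Vxxx Ux + vs * e * (Vx * Vxxx))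
         + vs * D2 / 2 * (Vx^2 / V^2) + vs * e powr ((\<alpha> + 2) / 2) * (V powr (-\<alpha> - 4) * Vx^2)
       \<le> chi2^2 * vs / (2 * D2) * Su^2 * (Ux^2 / U^2)"
    using flux_dissipation_le[where chi = chi2 and yx = Vx and yxxx = Vxxx and zx = Ux,
        OF V e _ pos(2) _ Su] \<open>vs > 0\<close> U by simp
  show ?thesis
    using reaction flux_u mult_left_mono[OF flux_v less_imp_le[OF \<open>A > 0\<close>]]
    by (simp add: algebra_simps)
qed

lemma continuous_on_slice:
  assumes "continuous_on (A \<times> B) (\<lambda>(x, y). w x y)" "s \<in> B"
  shows "continuous_on A (\<lambda>x. w x s)"
proof -
  have "continuous_on A (\<lambda>x. (\<lambda>(x, y). w x y) (x, s))"
    by (rule continuous_on_compose2[OF assms(1)]) (use assms(2) in \<open>auto intro!: continuous_intros\<close>)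
  then show ?thesis by simp
qed

lemma continuous_on_swap_args:
  assumes "continuous_on (A \<times> B) (\<lambda>(x, y). w x y)"
  shows "continuous_on (B \<times> A) (\<lambda>p. w (snd p) (fst p))"
proof -
  have "continuous_on (B \<times> A) (\<lambda>p. (\<lambda>(x, y). w x y) (snd p, fst p))"
    by (rule continuous_on_compose2[OF assms]) (auto intro!: continuous_intros)
  then show ?thesis by simp
qed

lemma has_real_derivative_integral_comp:
  fixes w wt :: "real \<Rightarrow> real \<Rightarrow> real" and \<Phi> \<Phi>' :: "real \<Rightarrow> real"
  assumes cw: "continuous_on ({a..b} \<times> {0<..}) (\<lambda>(x,s). w x s)"
    and cwt: "continuous_on ({a..b} \<times> {0<..}) (\<lambda>(x,s). wt x s)"
    and dw: "\<And>x s. x \<in> {a..b} \<Longrightarrow> s > 0 \<Longrightarrow> ((\<lambda>s. w x s) has_real_derivative wt x s) (at s)"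
    and wpos: "\<And>x s. x \<in> {a..b} \<Longrightarrow> s > 0 \<Longrightarrow> w x s > 0"
    and d\<Phi>: "\<And>y. y > 0 \<Longrightarrow> (\<Phi> has_real_derivative \<Phi>' y) (at y)"
    and c\<Phi>': "continuous_on {0<..} \<Phi>'"
    and t: "t > 0"
  shows "((\<lambda>s. integral {a..b} (\<lambda>x. \<Phi> (w x s))) has_real_derivative
           integral {a..b} (\<lambda>x. \<Phi>' (w x t) * wt x t)) (at t)"
proof -
  have c\<Phi>: "continuous_on {0<..} \<Phi>"
    using d\<Phi> by (meson DERIV_isCont continuous_at_imp_continuous_on greaterThan_iff)
  have c\<Phi>w: "continuous_on ({0<..} \<times> {a..b}) (\<lambda>p. \<Phi> (w (snd p) (fst p)))"
    by (rule continuous_on_compose2[OF c\<Phi> continuous_on_swap_args[OF cw]]) (auto intro: wpos)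
  have c\<Phi>'w: "continuous_on ({0<..} \<times> {a..b}) (\<lambda>p. \<Phi>' (w (snd p) (fst p)))"
    by (rule continuous_on_compose2[OF c\<Phi>' continuous_on_swap_args[OF cw]]) (auto intro: wpos)
  have "((\<lambda>s. integral (cbox a b) (\<lambda>x. \<Phi> (w x s))) has_field_derivative
           integral (cbox a b) (\<lambda>x. \<Phi>' (w x t) * wt x t)) (at t within {0<..})"
  proof (rule leibniz_rule_field_derivative[where f = "\<lambda>s x. \<Phi> (w x s)" and fx = "\<lambda>s x. \<Phi>' (w x s) * wt x s"])
    fix s x :: real assume "s \<in> {0<..}" "x \<in> cbox a b"
    then show "((\<lambda>s. \<Phi> (w x s)) has_field_derivative \<Phi>' (w x s) * wt x s) (at s within {0<..})"
      using DERIV_chain2[OF d\<Phi>[OF wpos] dw, of x s] by (auto intro: has_field_derivative_at_within)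
  next
    fix s :: real assume s: "s \<in> {0<..}"
    have "continuous_on {a..b} (\<lambda>x. \<Phi> (w (snd (s,x)) (fst (s,x))))"
      by (rule continuous_on_compose2[OF c\<Phi>w]) (use s in \<open>auto intro!: continuous_intros\<close>)
    then show "(\<lambda>x. \<Phi> (w x s)) integrable_on cbox a b"
      by (simp add: integrable_continuous_real)
  next
    show "continuous_on ({0<..} \<times> cbox a b) (\<lambda>(s, x). \<Phi>' (w x s) * wt x s)"
      using continuous_on_mult[OF c\<Phi>'w continuous_on_swap_args[OF cwt]] by (simp add: split_beta)
  qed (use t in simp_all)
  moreover have "at t within {0<..} = at t"
    using t by (intro at_within_open) auto
  ultimately show ?thesis
    unfolding cbox_interval by simp
qed

lemma integral_by_parts_zero_boundary:
  fixes f f' g g' :: "real \<Rightarrow> real"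
  assumes ab: "a \<le> b"
    and df: "\<And>x. x \<in> {a..b} \<Longrightarrow> (f has_real_derivative f' x) (at x within {a..b})"
    and dg: "\<And>x. x \<in> {a..b} \<Longrightarrow> (g has_real_derivative g' x) (at x within {a..b})"
    and int: "(\<lambda>x. f' x * g x) integrable_on {a..b}" "(\<lambda>x. f x * g' x) integrable_on {a..b}"
    and boundary: "f a * g a = 0" "f b * g b = 0"
  shows "integral {a..b} (\<lambda>x. f x * g' x) = - integral {a..b} (\<lambda>x. f' x * g x)"
proof -
  have "((\<lambda>x. f' x * g x + f x * g' x) has_integral (f b * g b - f a * g a)) {a..b}"
  proof (rule fundamental_theorem_of_calculus[OF ab])
    fix x assume x: "x \<in> {a..b}"
    have "((\<lambda>x. f x * g x) has_real_derivative f x * g' x + f' x * g x) (at x within {a..b})"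
      by (rule DERIV_mult'[OF df[OF x] dg[OF x]])
    then show "((\<lambda>x. f x * g x) has_vector_derivative f' x * g x + f x * g' x) (at x within {a..b})"
      by (simp add: has_real_derivative_iff_has_vector_derivative[symmetric] add.commute)
  qed
  then have "integral {a..b} (\<lambda>x. f' x * g x + f x * g' x) = 0"
    using boundary by (simp add: integral_unique)
  then show ?thesis using integral_add[OF int] by simp
qed

lemma integral_mult_third_deriv_nonpos:
  fixes f f' f'' :: "real \<Rightarrow> real"
  assumes ab: "a \<le> b"
    and cont: "continuous_on {a..b} f" "continuous_on {a..b} f'" "continuous_on {a..b} f''"
    and df: "\<And>x. x \<in> {a..b} \<Longrightarrow> (f has_real_derivative f' x) (at x within {a..b})"
    and df': "\<And>x. x \<in> {a..b} \<Longrightarrow> (f' has_real_derivative f'' x) (at x within {a..b})"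
    and boundary: "f a = 0" "f b = 0"
  shows "integral {a..b} (\<lambda>x. f x * f'' x) \<le> 0"
proof -
  have "integral {a..b} (\<lambda>x. f x * f'' x) = - integral {a..b} (\<lambda>x. f' x * f' x)"
    by (rule integral_by_parts_zero_boundary[OF ab df df'])
       (use cont boundary in \<open>auto intro!: integrable_continuous_real continuous_intros\<close>)
  moreover have "integral {a..b} (\<lambda>x. f' x * f' x) \<ge> 0"
    using cont by (auto intro!: integral_nonneg integrable_continuous_real continuous_intros)
  ultimately show ?thesis by simp
qed

lemma power2_le_Sup_abs_power2:
  fixes f :: "real \<Rightarrow> real"
  assumes ab: "a < b" and f: "continuous_on {a..b} f" and x: "x \<in> {a..b}"
  shows "(f x)^2 \<le> (Sup ((\<lambda>x. \<bar>f x\<bar>) ` {a<..<b}))^2"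
proof -
  define S where "S = Sup ((\<lambda>x. \<bar>f x\<bar>) ` {a<..<b})"
  have cont: "continuous_on {a..b} (\<lambda>x. \<bar>f x\<bar>)" using f by (intro continuous_intros)
  have "compact ((\<lambda>x. \<bar>f x\<bar>) ` {a..b})" by (rule compact_continuous_image[OF cont]) simp
  then have "bdd_above ((\<lambda>x. \<bar>f x\<bar>) ` {a..b})"
    by (intro bounded_imp_bdd_above compact_imp_bounded)
  then have "bdd_above ((\<lambda>x. \<bar>f x\<bar>) ` {a<..<b})"
    by (rule bdd_above_mono) auto
  then have upper: "\<bar>f y\<bar> \<le> S" if "y \<in> {a<..<b}" for y
    unfolding S_def by (rule cSUP_upper[OF that])
  have "closure {a<..<b} = {a..b}" using ab by (rule closure_greaterThanLessThan)
  then have "\<bar>f x\<bar> \<le> S"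
    using continuous_le_on_closure[where f = "\<lambda>x. \<bar>f x\<bar>" and S = "{a<..<b}"] cont x upper
    by simp
  then have "\<bar>f x\<bar>^2 \<le> S^2" by (intro power_mono) auto
  then show ?thesis unfolding S_def by simp
qed

lemma classical_C41_at_time:
  assumes C: "classical_C41 a b u ux uxx uxxx uxxxx ut" and t: "t > 0"
  shows "continuous_on {a..b} (\<lambda>x. u x t)" "continuous_on {a..b} (\<lambda>x. ux x t)"
    "continuous_on {a..b} (\<lambda>x. uxx x t)" "continuous_on {a..b} (\<lambda>x. uxxx x t)"
    "continuous_on {a..b} (\<lambda>x. ut x t)"
    and "x \<in> {a..b} \<Longrightarrow> ((\<lambda>y. u y t) has_real_derivative ux x t) (at x within {a..b})"
    "x \<in> {a..b} \<Longrightarrow> ((\<lambda>y. ux y t) has_real_derivative uxx x t) (at x within {a..b})"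
    "x \<in> {a..b} \<Longrightarrow> ((\<lambda>y. uxx y t) has_real_derivative uxxx x t) (at x within {a..b})"
proof -
  show "continuous_on {a..b} (\<lambda>x. u x t)" "continuous_on {a..b} (\<lambda>x. ux x t)"
    "continuous_on {a..b} (\<lambda>x. uxx x t)" "continuous_on {a..b} (\<lambda>x. uxxx x t)"
    "continuous_on {a..b} (\<lambda>x. ut x t)"
    using C t unfolding classical_C41_def by (auto intro: continuous_on_slice)
  show "x \<in> {a..b} \<Longrightarrow> ((\<lambda>y. u y t) has_real_derivative ux x t) (at x within {a..b})"
    "x \<in> {a..b} \<Longrightarrow> ((\<lambda>y. ux y t) has_real_derivative uxx x t) (at x within {a..b})"
    "x \<in> {a..b} \<Longrightarrow> ((\<lambda>y. uxx y t) has_real_derivative uxxx x t) (at x within {a..b})"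
    using C t unfolding classical_C41_def by blast+
qed

lemma energy_component_has_derivative:
  fixes w wx wxx wxxx wxxxx wt :: "real \<Rightarrow> real \<Rightarrow> real"
  assumes C: "classical_C41 a b w wx wxx wxxx wxxxx wt"
    and pos: "\<And>x s. x \<in> {a..b} \<Longrightarrow> s > 0 \<Longrightarrow> w x s > 0"
    and c: "c > 0" and t: "t > 0"
  shows "((\<lambda>s. integral {a..b} (\<lambda>x. phi c (w x s)) + c * e / 6 * integral {a..b} (\<lambda>x. 1 / (w x s)^2))
          has_real_derivative integral {a..b} (\<lambda>x. energy_weight c e (w x t) * wt x t)) (at t)"
proof -
  have cw: "continuous_on ({a..b} \<times> {0<..}) (\<lambda>(x,s). w x s)"
    using C unfolding classical_C41_def by (auto elim: continuous_on_subset)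
  have cwt: "continuous_on ({a..b} \<times> {0<..}) (\<lambda>(x,s). wt x s)"
    using C unfolding classical_C41_def by blast
  have dw: "((\<lambda>s. w x s) has_real_derivative wt x s) (at s)" if "x \<in> {a..b}" "s > 0" for x s
    using C that unfolding classical_C41_def by blast
  have "((\<lambda>s. integral {a..b} (\<lambda>x. phi c (w x s) + c * e / 6 * (1 / (w x s)^2)))
      has_real_derivative integral {a..b} (\<lambda>x. energy_weight c e (w x t) * wt x t)) (at t)"
    by (rule has_real_derivative_integral_comp[OF cw cwt dw pos energy_density_has_derivative[OF c]
        continuous_on_energy_weight t])
  then show ?thesis
  proof (rule has_field_derivative_transform_within_open[where S = "{0<..}"])
    fix s :: real assume "s \<in> {0<..}"
    then have s: "s > 0" by simp
    have cont: "continuous_on {a..b} (\<lambda>x. w x s)" using classical_C41_at_time(1)[OF C s] .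
    have int: "(\<lambda>x. phi c (w x s)) integrable_on {a..b}" "(\<lambda>x. 1 / (w x s)^2) integrable_on {a..b}"
      using cont pos[OF _ s] c unfolding phi_def
      by (auto intro!: integrable_continuous_real continuous_intros simp: less_imp_neq[symmetric])
    show "integral {a..b} (\<lambda>x. phi c (w x s) + c * e / 6 * (1 / (w x s)^2))
        = integral {a..b} (\<lambda>x. phi c (w x s)) + c * e / 6 * integral {a..b} (\<lambda>x. 1 / (w x s)^2)"
      using integral_add[OF int(1) integrable_on_cmult_left[OF int(2), of "c * e / 6"]]
      by (simp only: of_real_eq_id id_apply integral_mult_right)
  qed (use t in auto)
qed

lemma energy_has_derivative:
  fixes u ux uxx uxxx uxxxx ut v vx vxx vxxx vxxxx vt :: "real \<Rightarrow> real \<Rightarrow> real"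
  assumes Cu: "classical_C41 a b u ux uxx uxxx uxxxx ut"
    and Cv: "classical_C41 a b v vx vxx vxxx vxxxx vt"
    and pos_u: "\<And>x s. x \<in> {a..b} \<Longrightarrow> s > 0 \<Longrightarrow> u x s > 0"
    and pos_v: "\<And>x s. x \<in> {a..b} \<Longrightarrow> s > 0 \<Longrightarrow> v x s > 0"
    and "us > 0" "vs > 0" "t > 0"
  shows "((\<lambda>s. integral {a..b} (\<lambda>x. phi us (u x s)) + us * e / 6 * integral {a..b} (\<lambda>x. 1 / (u x s)^2)
            + A * integral {a..b} (\<lambda>x. phi vs (v x s)) + A * vs * e / 6 * integral {a..b} (\<lambda>x. 1 / (v x s)^2))
          has_real_derivative integral {a..b} (\<lambda>x. energy_weight us e (u x t) * ut x t)
            + A * integral {a..b} (\<lambda>x. energy_weight vs e (v x t) * vt x t)) (at t)"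
proof -
  have "((\<lambda>s. (integral {a..b} (\<lambda>x. phi us (u x s)) + us * e / 6 * integral {a..b} (\<lambda>x. 1 / (u x s)^2))
        + A * (integral {a..b} (\<lambda>x. phi vs (v x s)) + vs * e / 6 * integral {a..b} (\<lambda>x. 1 / (v x s)^2)))
      has_real_derivative integral {a..b} (\<lambda>x. energy_weight us e (u x t) * ut x t)
        + A * integral {a..b} (\<lambda>x. energy_weight vs e (v x t) * vt x t)) (at t)"
    using assms by (intro DERIV_add DERIV_cmult energy_component_has_derivative)
  then show ?thesis by (simp add: algebra_simps)
qed

lemma energy_weight_balance_le:
  fixes w wx wxx wxxx wxxxx wt :: "real \<Rightarrow> real \<Rightarrow> real" and F S :: "real \<Rightarrow> real"
  assumes C: "classical_C41 a b w wx wxx wxxx wxxxx wt" and t: "t > 0" and ab: "a \<le> b"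
    and pos: "\<And>x. x \<in> {a..b} \<Longrightarrow> w x t > 0" and ce: "c * e \<ge> 0"
    and cF: "continuous_on {a..b} F" and cS: "continuous_on {a..b} S"
    and dF: "\<And>x. x \<in> {a..b} \<Longrightarrow> (F has_real_derivative wt x t - S x) (at x within {a..b})"
    and boundary: "F a = 0" "F b = 0" "wx a t = 0" "wx b t = 0"
  shows "integral {a..b} (\<lambda>x. energy_weight c e (w x t) * wt x t)
       \<le> integral {a..b} (\<lambda>x. energy_weight c e (w x t) * S x
            - ((c / (w x t)^2 + c * e / (w x t)^4) * wx x t * F x + c * e * (wx x t * wxxx x t)))"
proof -
  note at_t = classical_C41_at_time[OF C t]
  note [continuous_intros] = at_t(1-5) cF cS
  define H where "H x = energy_weight c e (w x t)" for x
  define H' where "H' x = (c / (w x t)^2 + c * e / (w x t)^4) * wx x t" for x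
  have nz: "w x t \<noteq> 0" if "x \<in> {a..b}" for x using pos[OF that] by simp
  have [continuous_intros]: "continuous_on {a..b} H" "continuous_on {a..b} H'"
    unfolding H_def H'_def energy_weight_def using nz by (auto intro!: continuous_intros)
  have dH: "(H has_real_derivative H' x) (at x within {a..b})" if "x \<in> {a..b}" for x
    unfolding H_def H'_def
    using DERIV_chain2[OF energy_weight_has_derivative[OF nz[OF that]] at_t(6)[OF that]] by simp
  have flux: "integral {a..b} (\<lambda>x. H x * (wt x t - S x)) = - integral {a..b} (\<lambda>x. H' x * F x)"
    by (rule integral_by_parts_zero_boundary[OF ab dH dF])
       (use boundary in \<open>auto intro!: integrable_continuous_real continuous_intros\<close>)
  have fourth_order: "integral {a..b} (\<lambda>x. wx x t * wxxx x t) \<le> 0"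
    by (rule integral_mult_third_deriv_nonpos[OF ab at_t(2-4) at_t(7,8) boundary(3,4)])
  have "integral {a..b} (\<lambda>x. H x * wt x t)
      = integral {a..b} (\<lambda>x. H x * S x) + integral {a..b} (\<lambda>x. H x * (wt x t - S x))"
    by (subst integral_add[symmetric])
       (auto simp: algebra_simps intro!: integrable_continuous_real continuous_intros)
  also have "\<dots> \<le> integral {a..b} (\<lambda>x. H x * S x)
      - (integral {a..b} (\<lambda>x. H' x * F x) + c * e * integral {a..b} (\<lambda>x. wx x t * wxxx x t))"
    unfolding flux using mult_nonneg_nonpos[OF ce fourth_order] by simp
  also have "\<dots> = integral {a..b} (\<lambda>x. H x * S x - (H' x * F x + c * e * (wx x t * wxxx x t)))"
    by (intro integral_unique[symmetric] has_integral_diff has_integral_add has_integral_mult_right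
        integrable_integral integrable_continuous_real continuous_intros)
  finally show ?thesis unfolding H_def H'_def .
qed

lemma integral_dissipation_le:
  fixes a b \<alpha> D1 D2 a1 a2 lam1 lam2 chi1 chi2 A us vs e t :: real
    and u ux uxx uxxx uxxxx ut v vx vxx vxxx vxxxx vt :: "real \<Rightarrow> real \<Rightarrow> real"
  assumes ab: "a < b" and e: "e > 0" and t: "t > 0"
    and pos: "D1 > 0" "D2 > 0" "a1 > 0" "a2 > 0" "lam1 > 0"
    and lam: "lam2 > a2 * lam1"
    and A_def: "A = a1 / a2"
    and us_def: "us = (lam1 + a1 * lam2) / (1 + a1 * a2)"
    and vs_def: "vs = (lam2 - a2 * lam1) / (1 + a1 * a2)"
    and Cu: "classical_C41 a b u ux uxx uxxx uxxxx ut"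
    and Cv: "classical_C41 a b v vx vxx vxxx vxxxx vt"
    and pos_u: "\<And>x. x \<in> {a..b} \<Longrightarrow> u x t > 0"
    and pos_v: "\<And>x. x \<in> {a..b} \<Longrightarrow> v x t > 0"
  shows "integral {a..b} (\<lambda>x. energy_weight us e (u x t) * (3 * (u x t)^3 / (3 * (u x t)^2 + e) * (lam1 - u x t + a1 * v x t))
            - ((us / (u x t)^2 + us * e / (u x t)^4) * ux x t
                 * regularized_flux e \<alpha> D1 (- chi1) (u x t) (ux x t) (uxxx x t) (vx x t)
               + us * e * (ux x t * uxxx x t)))
       + A * integral {a..b} (\<lambda>x. energy_weight vs e (v x t) * (3 * (v x t)^3 / (3 * (v x t)^2 + e) * (lam2 - v x t - a2 * u x t))
            - ((vs / (v x t)^2 + vs * e / (v x t)^4) * vx x t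
                 * regularized_flux e \<alpha> D2 chi2 (v x t) (vx x t) (vxxx x t) (ux x t)
               + vs * e * (vx x t * vxxx x t)))
       + (D1 * us / 2 - A * chi2^2 * vs / (2 * D2) * (Sup ((\<lambda>x. \<bar>u x t\<bar>) ` {a<..<b}))^2)
           * integral {a..b} (\<lambda>x. (ux x t)^2 / (u x t)^2)
       + (A * D2 * vs / 2 - chi1^2 * us / (2 * D1) * (Sup ((\<lambda>x. \<bar>v x t\<bar>) ` {a<..<b}))^2)
           * integral {a..b} (\<lambda>x. (vx x t)^2 / (v x t)^2)
       + integral {a..b} (\<lambda>x. (u x t - us)^2) + A * integral {a..b} (\<lambda>x. (v x t - vs)^2)
       + us * e powr ((\<alpha> + 2) / 2) * integral {a..b} (\<lambda>x. (u x t) powr (-\<alpha> - 4) * (ux x t)^2)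
       + A * vs * e powr ((\<alpha> + 2) / 2) * integral {a..b} (\<lambda>x. (v x t) powr (-\<alpha> - 4) * (vx x t)^2)
     \<le> (1 + a1) / (2 * sqrt 3) * sqrt e * integral {a..b} (\<lambda>x. u x t)
       + A / (2 * sqrt 3) * sqrt e * integral {a..b} (\<lambda>x. v x t)"
proof -
  note at_u = classical_C41_at_time[OF Cu t] and at_v = classical_C41_at_time[OF Cv t]
  note [continuous_intros] = at_u(1-5) at_v(1-5)
  have nz: "u x t \<noteq> 0" "v x t \<noteq> 0" "3 * (u x t)^2 + e \<noteq> 0" "3 * (v x t)^2 + e \<noteq> 0"
    if "x \<in> {a..b}" for x
    using pos_u[OF that] pos_v[OF that] e by (smt (verit) zero_le_power2)+
  have Su: "(u x t)^2 \<le> (Sup ((\<lambda>x. \<bar>u x t\<bar>) ` {a<..<b}))^2" if "x \<in> {a..b}" for x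
    by (rule power2_le_Sup_abs_power2[OF ab at_u(1) that])
  have Sv: "(v x t)^2 \<le> (Sup ((\<lambda>x. \<bar>v x t\<bar>) ` {a<..<b}))^2" if "x \<in> {a..b}" for x
    by (rule power2_le_Sup_abs_power2[OF ab at_v(1) that])
  show ?thesis
    apply (rule has_integral_le[where S = "{a..b}"])
      apply (rule has_integral_add has_integral_mult_right integrable_integral
        | rule integrable_continuous_real, intro continuous_intros;
          simp add: pos_u pos_v nz e less_imp_le[OF e])+
    by (rule pointwise_dissipation_le[OF pos_u pos_v e pos lam A_def us_def vs_def Su Sv])
qed

lemma energy_dissipation_le:
  fixes a b \<alpha> D1 D2 a1 a2 lam1 lam2 chi1 chi2 A us vs e t :: real
    and u ux uxx uxxx uxxxx ut v vx vxx vxxx vxxxx vt :: "real \<Rightarrow> real \<Rightarrow> real"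
  assumes ab: "a < b" and e: "e > 0" and t: "t > 0"
    and pos: "D1 > 0" "D2 > 0" "a1 > 0" "a2 > 0" "lam1 > 0"
    and lam: "lam2 > a2 * lam1"
    and A_def: "A = a1 / a2"
    and us_def: "us = (lam1 + a1 * lam2) / (1 + a1 * a2)"
    and vs_def: "vs = (lam2 - a2 * lam1) / (1 + a1 * a2)"
    and Cu: "classical_C41 a b u ux uxx uxxx uxxxx ut"
    and Cv: "classical_C41 a b v vx vxx vxxx vxxxx vt"
    and pos_u: "\<And>x. x \<in> {a..b} \<Longrightarrow> u x t > 0"
    and pos_v: "\<And>x. x \<in> {a..b} \<Longrightarrow> v x t > 0"
    and pde_u: "\<And>x. x \<in> {a..b} \<Longrightarrow>
       ((\<lambda>y. regularized_flux e \<alpha> D1 (- chi1) (u y t) (ux y t) (uxxx y t) (vx y t)) has_real_derivative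
          ut x t - 3 * (u x t)^3 / (3 * (u x t)^2 + e) * (lam1 - u x t + a1 * v x t)) (at x within {a..b})"
    and pde_v: "\<And>x. x \<in> {a..b} \<Longrightarrow>
       ((\<lambda>y. regularized_flux e \<alpha> D2 chi2 (v y t) (vx y t) (vxxx y t) (ux y t)) has_real_derivative
          vt x t - 3 * (v x t)^3 / (3 * (v x t)^2 + e) * (lam2 - v x t - a2 * u x t)) (at x within {a..b})"
    and bc: "ux a t = 0" "ux b t = 0" "uxxx a t = 0" "uxxx b t = 0"
      "vx a t = 0" "vx b t = 0" "vxxx a t = 0" "vxxx b t = 0"
  shows "integral {a..b} (\<lambda>x. energy_weight us e (u x t) * ut x t)
       + A * integral {a..b} (\<lambda>x. energy_weight vs e (v x t) * vt x t)
       + (D1 * us / 2 - A * chi2^2 * vs / (2 * D2) * (Sup ((\<lambda>x. \<bar>u x t\<bar>) ` {a<..<b}))^2)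
           * integral {a..b} (\<lambda>x. (ux x t)^2 / (u x t)^2)
       + (A * D2 * vs / 2 - chi1^2 * us / (2 * D1) * (Sup ((\<lambda>x. \<bar>v x t\<bar>) ` {a<..<b}))^2)
           * integral {a..b} (\<lambda>x. (vx x t)^2 / (v x t)^2)
       + integral {a..b} (\<lambda>x. (u x t - us)^2) + A * integral {a..b} (\<lambda>x. (v x t - vs)^2)
       + us * e powr ((\<alpha> + 2) / 2) * integral {a..b} (\<lambda>x. (u x t) powr (-\<alpha> - 4) * (ux x t)^2)
       + A * vs * e powr ((\<alpha> + 2) / 2) * integral {a..b} (\<lambda>x. (v x t) powr (-\<alpha> - 4) * (vx x t)^2)
     \<le> (1 + a1) / (2 * sqrt 3) * sqrt e * integral {a..b} (\<lambda>x. u x t)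
       + A / (2 * sqrt 3) * sqrt e * integral {a..b} (\<lambda>x. v x t)"
proof -
  note at_u = classical_C41_at_time[OF Cu t] and at_v = classical_C41_at_time[OF Cv t]
  note [continuous_intros] = at_u(1-5) at_v(1-5)
  have nz: "u x t \<noteq> 0" "v x t \<noteq> 0" "3 * (u x t)^2 + e \<noteq> 0" "3 * (v x t)^2 + e \<noteq> 0"
    if "x \<in> {a..b}" for x
    using pos_u[OF that] pos_v[OF that] e by (smt (verit) zero_le_power2)+
  have "us > 0" "vs > 0"
    using coexistence_equilibrium_pos[OF pos(3-5) lam us_def vs_def] by simp_all
  have "A > 0" using pos A_def by simp
  have balance_u: "integral {a..b} (\<lambda>x. energy_weight us e (u x t) * ut x t)
      \<le> integral {a..b} (\<lambda>x. energy_weight us e (u x t) * (3 * (u x t)^3 / (3 * (u x t)^2 + e) * (lam1 - u x t + a1 * v x t))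
            - ((us / (u x t)^2 + us * e / (u x t)^4) * ux x t
                 * regularized_flux e \<alpha> D1 (- chi1) (u x t) (ux x t) (uxxx x t) (vx x t)
               + us * e * (ux x t * uxxx x t)))"
    by (rule energy_weight_balance_le[OF Cu t _ pos_u _ _ _ pde_u])
       (use ab e \<open>us > 0\<close> bc pos_u nz in \<open>auto intro!: continuous_intros\<close>)
  have balance_v: "integral {a..b} (\<lambda>x. energy_weight vs e (v x t) * vt x t)
      \<le> integral {a..b} (\<lambda>x. energy_weight vs e (v x t) * (3 * (v x t)^3 / (3 * (v x t)^2 + e) * (lam2 - v x t - a2 * u x t))
            - ((vs / (v x t)^2 + vs * e / (v x t)^4) * vx x t
                 * regularized_flux e \<alpha> D2 chi2 (v x t) (vx x t) (vxxx x t) (ux x t)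
               + vs * e * (vx x t * vxxx x t)))"
    by (rule energy_weight_balance_le[OF Cv t _ pos_v _ _ _ pde_v])
       (use ab e \<open>vs > 0\<close> bc pos_v nz in \<open>auto intro!: continuous_intros\<close>)
  show ?thesis
    using integral_dissipation_le[OF ab e t pos lam A_def us_def vs_def Cu Cv pos_u pos_v, of \<alpha> chi1 chi2]
      balance_u mult_left_mono[OF balance_v less_imp_le[OF \<open>A > 0\<close>]]
    by linarith
qed

theorem lemma8p2:
  fixes a b \<alpha> D1 D2 a1 a2 lam1 lam2 chi1 chi2 A us vs :: real
    and u0 u0x v0 v0x :: "real \<Rightarrow> real"
    and u0e v0e :: "real \<Rightarrow> real \<Rightarrow> real"
    and u ux uxx uxxx uxxxx ut v vx vxx vxxx vxxxx vt :: "real \<Rightarrow> real \<Rightarrow> real \<Rightarrow> real"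
    and E :: "real \<Rightarrow> real \<Rightarrow> real"
  assumes ab: "a < b"
    and alpha: "0 < \<alpha>" "\<alpha> \<le> 1/2"
    and pos: "D1 > 0" "D2 > 0" "a1 > 0" "a2 > 0" "lam1 > 0" "lam2 > 0" "chi1 > 0" "chi2 > 0"
    and lam: "lam2 > a2 * lam1"
    and IEu: "IE_data a b u0 u0x u0e"
    and IEv: "IE_data a b v0 v0x v0e"
    and reg_u: "\<forall>e\<in>{0<..<1}. classical_C41 a b (u e) (ux e) (uxx e) (uxxx e) (uxxxx e) (ut e)"
    and reg_v: "\<forall>e\<in>{0<..<1}. classical_C41 a b (v e) (vx e) (vxx e) (vxxx e) (vxxxx e) (vt e)"
    and pos_u: "\<forall>e\<in>{0<..<1}. \<forall>x\<in>{a..b}. \<forall>t\<ge>0. u e x t > 0"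
    and pos_v: "\<forall>e\<in>{0<..<1}. \<forall>x\<in>{a..b}. \<forall>t\<ge>0. v e x t > 0"
    and pde_u: "\<forall>e\<in>{0<..<1}. \<forall>t>0. \<forall>x\<in>{a..b}.
       ((\<lambda>y. - e * ((u e y t)^4 / ((u e y t)^2 + e) * uxxx e y t)
              + e powr (\<alpha>/2) * ((u e y t) powr (-\<alpha>) * ux e y t)
              + D1 * ux e y t
              - chi1 * ((u e y t)^3 / ((u e y t)^2 + e) * vx e y t))
        has_real_derivative
          (ut e x t - 3 * (u e x t)^3 / (3 * (u e x t)^2 + e) * (lam1 - u e x t + a1 * v e x t)))
       (at x within {a..b})"
    and pde_v: "\<forall>e\<in>{0<..<1}. \<forall>t>0. \<forall>x\<in>{a..b}.
       ((\<lambda>y. - e * ((v e y t)^4 / ((v e y t)^2 + e) * vxxx e y t)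
              + e powr (\<alpha>/2) * ((v e y t) powr (-\<alpha>) * vx e y t)
              + D2 * vx e y t
              + chi2 * ((v e y t)^3 / ((v e y t)^2 + e) * ux e y t))
        has_real_derivative
          (vt e x t - 3 * (v e x t)^3 / (3 * (v e x t)^2 + e) * (lam2 - v e x t - a2 * u e x t)))
       (at x within {a..b})"
    and bc: "\<forall>e\<in>{0<..<1}. \<forall>t>0. ux e a t = 0 \<and> ux e b t = 0 \<and> uxxx e a t = 0 \<and> uxxx e b t = 0 \<and>
                                  vx e a t = 0 \<and> vx e b t = 0 \<and> vxxx e a t = 0 \<and> vxxx e b t = 0"
    and init: "\<forall>e\<in>{0<..<1}. \<forall>x\<in>{a..b}. u e x 0 = u0e e x \<and> v e x 0 = v0e e x"
    and A_def: "A = a1 / a2"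
    and us_def: "us = (lam1 + a1 * lam2) / (1 + a1 * a2)"
    and vs_def: "vs = (lam2 - a2 * lam1) / (1 + a1 * a2)"
    and E_def: "E = (\<lambda>e t. integral {a..b} (\<lambda>x. phi us (u e x t))
                        + us * e / 6 * integral {a..b} (\<lambda>x. 1 / (u e x t)^2)
                        + A * integral {a..b} (\<lambda>x. phi vs (v e x t))
                        + A * vs * e / 6 * integral {a..b} (\<lambda>x. 1 / (v e x t)^2))"
  shows "\<forall>t>0. \<forall>e\<in>{0<..<1}. \<exists>E'. ((\<lambda>s. E e s) has_real_derivative E') (at t) \<and>
     E' + (D1 * us / 2 - A * chi2^2 * vs / (2 * D2) * (Sup ((\<lambda>x. \<bar>u e x t\<bar>) ` {a<..<b}))^2)
            * integral {a..b} (\<lambda>x. (ux e x t)^2 / (u e x t)^2)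
        + (A * D2 * vs / 2 - chi1^2 * us / (2 * D1) * (Sup ((\<lambda>x. \<bar>v e x t\<bar>) ` {a<..<b}))^2)
            * integral {a..b} (\<lambda>x. (vx e x t)^2 / (v e x t)^2)
        + integral {a..b} (\<lambda>x. (u e x t - us)^2) + A * integral {a..b} (\<lambda>x. (v e x t - vs)^2)
        + us * e powr ((\<alpha> + 2) / 2) * integral {a..b} (\<lambda>x. (u e x t) powr (-\<alpha> - 4) * (ux e x t)^2)
        + A * vs * e powr ((\<alpha> + 2) / 2) * integral {a..b} (\<lambda>x. (v e x t) powr (-\<alpha> - 4) * (vx e x t)^2)
     \<le> (1 + a1) / (2 * sqrt 3) * sqrt e * integral {a..b} (\<lambda>x. u e x t)
        + A / (2 * sqrt 3) * sqrt e * integral {a..b} (\<lambda>x. v e x t)"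
proof -
  have "us > 0" "vs > 0" using coexistence_equilibrium_pos[OF pos(3-5) lam us_def vs_def] by simp_all
  show ?thesis
    apply (intro allI impI ballI exI conjI)
     apply (unfold E_def)
     apply (rule energy_has_derivative[OF reg_u[rule_format] reg_v[rule_format] _ _ \<open>us > 0\<close> \<open>vs > 0\<close>];
        use pos_u pos_v in force)
    subgoal for t e
      by (rule energy_dissipation_le[OF ab _ _ pos(1-5) lam A_def us_def vs_def
            reg_u[rule_format] reg_v[rule_format]])
         (use pos_u pos_v bc pde_u[unfolded regularized_flux_minus]
            pde_v[unfolded regularized_flux_def[symmetric]] in auto)
    done
qed

end
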